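(* Let $w\in\Sigma^*$ label a path in the NFA $\mathcal{A}$ from a state $A$ to a state $A'$. Then this path is unique: whenever $w=uv$ and $A\xrightarrow{u}B\xrightarrow{v}A'$ and $A\xrightarrow{u}B'\xrightarrow{v}A'$ are paths in $\mathcal{A}$, then $B=B'$.
   Context: $\Sigma$ is a finite alphabet with an involution $a\mapsto\bar a$ ($\bar{\bar a}=a$), extended to words by $\overline{a_1\cdots a_m}=\bar a_m\cdots\bar a_1$. $\kappa$ is a fixed positive integer. $\mathcal{A}_1=(Q_1,\Sigma,E_1,\{q_{01}\},F_1)$ and $\mathcal{A}_2=(Q_2,\Sigma,E_2,\{q_{02}\},F_2)$ are complete DFAs; $p\cdot w$ is the state reached from $p$ on $w$. Construction of $\mathcal{A}$: $Q_{12}=\{(q_{01}\cdot w,q_{02}\cdot w):w\in\Sigma^*\}$ with $(p_1,p_2)\cdot w=(p_1\cdot w,p_2\cdot w)$. For $(p_1,p_2,q_1,q_2)\in Q_1\times Q_2\times Q_1\times Q_2$ let $B(p_1,p_2,q_1,q_2)=\{w:p_1\cdot w=q_1,\ p_2\cdot\bar w=q_2\}$; the quadruple is a basic bridge if this set is nonempty. States of $\mathcal{A}$ are all $((p_1,p_2),q_1,q_2,\ell)$ with $(p_1,p_2)\in Q_{12}$, $q_i\in Q_i$, $\ell\in\{0,\dots,\kappa\}$, $(p_1,p_2,q_1,q_2)$ a basic bridge. For $a\in\Sigma$, $P\in Q_{12}$, $q_i\in Q_i$, there is an $a$-arc from $(P,q_1\cdot\bar a,q_2\cdot\bar a,\ell)$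 to $(P\cdot a,q_1,q_2,\ell')$, provided both are states, exactly when: $\ell=\ell'=0$ and $q_1\cdot\bar a\notin F_1$, $q_2\cdot\bar a\notin F_2$; or $\ell=0,\ell'=1$ and ($q_1\cdot\bar a\in F_1$ or $q_2\cdot\bar a\in F_2$); or $1\le\ell<\kappa$ and $\ell'=\ell+1$. Initial states: $((q_{01},q_{02}),q_1',q_2',0)$; final states: those with $\ell=\kappa$. *)

theory Defs
  imports Main
begin

text \<open>Alphabet: a finite type 'a with an involution ia.  Complete DFAs are given by total
transition functions on finite state types 'q and 'r (so Q1 = UNIV, Q2 = UNIV).\<close>

definition involution :: "('a \<Rightarrow> 'a) \<Rightarrow> bool" where
  "involution ia \<longleftrightarrow> (\<forall>a. ia (ia a) = a)"

definition bar :: "('a \<Rightarrow> 'a) \<Rightarrow> 'a list \<Rightarrow> 'a list" where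
  "bar ia w = rev (map ia w)"

definition run :: "('s \<Rightarrow> 'a \<Rightarrow> 's) \<Rightarrow> 's \<Rightarrow> 'a list \<Rightarrow> 's" where
  "run d p w = foldl d p w"

definition Q12 :: "('q \<Rightarrow> 'a \<Rightarrow> 'q) \<Rightarrow> 'q \<Rightarrow> ('r \<Rightarrow> 'a \<Rightarrow> 'r) \<Rightarrow> 'r \<Rightarrow> ('q \<times> 'r) set" where
  "Q12 d1 q01 d2 q02 = {(run d1 q01 w, run d2 q02 w) | w. True}"

definition basic_bridge ::
  "('a \<Rightarrow> 'a) \<Rightarrow> ('q \<Rightarrow> 'a \<Rightarrow> 'q) \<Rightarrow> ('r \<Rightarrow> 'a \<Rightarrow> 'r) \<Rightarrow> 'q \<Rightarrow> 'r \<Rightarrow> 'q \<Rightarrow> 'r \<Rightarrow> bool" where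
  "basic_bridge ia d1 d2 p1 p2 q1 q2 \<longleftrightarrow>
     {w. run d1 p1 w = q1 \<and> run d2 p2 (bar ia w) = q2} \<noteq> {}"

type_synonym ('q, 'r) nstate = "('q \<times> 'r) \<times> 'q \<times> 'r \<times> nat"

definition is_state ::
  "('a \<Rightarrow> 'a) \<Rightarrow> nat \<Rightarrow> ('q \<Rightarrow> 'a \<Rightarrow> 'q) \<Rightarrow> 'q \<Rightarrow> ('r \<Rightarrow> 'a \<Rightarrow> 'r) \<Rightarrow> 'r
   \<Rightarrow> ('q, 'r) nstate \<Rightarrow> bool" where
  "is_state ia \<kappa> d1 q01 d2 q02 X \<longleftrightarrow>
     (case X of ((p1, p2), q1, q2, l) \<Rightarrow>
        (p1, p2) \<in> Q12 d1 q01 d2 q02 \<and> l \<le> \<kappa> \<and> basic_bridge ia d1 d2 p1 p2 q1 q2)"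

definition arc ::
  "('a \<Rightarrow> 'a) \<Rightarrow> nat \<Rightarrow> ('q \<Rightarrow> 'a \<Rightarrow> 'q) \<Rightarrow> 'q \<Rightarrow> 'q set \<Rightarrow> ('r \<Rightarrow> 'a \<Rightarrow> 'r) \<Rightarrow> 'r \<Rightarrow> 'r set
   \<Rightarrow> ('q, 'r) nstate \<Rightarrow> 'a \<Rightarrow> ('q, 'r) nstate \<Rightarrow> bool" where
  "arc ia \<kappa> d1 q01 F1 d2 q02 F2 X a Y \<longleftrightarrow>
     is_state ia \<kappa> d1 q01 d2 q02 X \<and> is_state ia \<kappa> d1 q01 d2 q02 Y \<and>
     (\<exists>p1 p2 q1 q2 l l'.
        X = ((p1, p2), d1 q1 (ia a), d2 q2 (ia a), l) \<and>
        Y = ((d1 p1 a, d2 p2 a), q1, q2, l') \<and>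
        ((l = 0 \<and> l' = 0 \<and> d1 q1 (ia a) \<notin> F1 \<and> d2 q2 (ia a) \<notin> F2) \<or>
         (l = 0 \<and> l' = 1 \<and> (d1 q1 (ia a) \<in> F1 \<or> d2 q2 (ia a) \<in> F2)) \<or>
         (1 \<le> l \<and> l < \<kappa> \<and> l' = l + 1)))"

inductive path ::
  "('a \<Rightarrow> 'a) \<Rightarrow> nat \<Rightarrow> ('q \<Rightarrow> 'a \<Rightarrow> 'q) \<Rightarrow> 'q \<Rightarrow> 'q set \<Rightarrow> ('r \<Rightarrow> 'a \<Rightarrow> 'r) \<Rightarrow> 'r \<Rightarrow> 'r set
   \<Rightarrow> ('q, 'r) nstate \<Rightarrow> 'a list \<Rightarrow> ('q, 'r) nstate \<Rightarrow> bool"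
  for ia \<kappa> d1 q01 F1 d2 q02 F2 where
  path_nil: "is_state ia \<kappa> d1 q01 d2 q02 X \<Longrightarrow> path ia \<kappa> d1 q01 F1 d2 q02 F2 X [] X"
| path_cons: "arc ia \<kappa> d1 q01 F1 d2 q02 F2 X a Y \<Longrightarrow> path ia \<kappa> d1 q01 F1 d2 q02 F2 Y w Z
     \<Longrightarrow> path ia \<kappa> d1 q01 F1 d2 q02 F2 X (a # w) Z"

end

theory Submission
  imports Defs
begin

text \<open>An arc into a state (P, q1, q2, l) forces its source to carry the bridge
  components (q1 \<cdot> abar, q2 \<cdot> abar); iterating, the bridge components of every state on a
  path are read off backwards from its last state and the remaining word.  Conversely an arc
  is determined by its source, its letter and the bridge components of its target: the
  P-component moves deterministically and the new level depends only on the old level and on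
  the source's bridge components.  So two paths labelled uv from A to A' agree letter by
  letter along u.\<close>

lemma path_append:
  "path ia \<kappa> d1 q01 F1 d2 q02 F2 X u Y \<Longrightarrow> path ia \<kappa> d1 q01 F1 d2 q02 F2 Y v Z
   \<Longrightarrow> path ia \<kappa> d1 q01 F1 d2 q02 F2 X (u @ v) Z"
  by (induction rule: path.induct) (auto intro: path.intros)

lemma path_Nil_iff:
  "path ia \<kappa> d1 q01 F1 d2 q02 F2 X [] Z \<longleftrightarrow> X = Z \<and> is_state ia \<kappa> d1 q01 d2 q02 X"
  by (auto elim: path.cases intro: path.intros)

lemma path_Cons_iff:
  "path ia \<kappa> d1 q01 F1 d2 q02 F2 X (a # w) Z \<longleftrightarrow>
   (\<exists>Y. arc ia \<kappa> d1 q01 F1 d2 q02 F2 X a Y \<and> path ia \<kappa> d1 q01 F1 d2 q02 F2 Y w Z)"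
  by (blast elim: path.cases intro: path.intros)

lemma path_bridge_components_run:
  assumes "path ia \<kappa> d1 q01 F1 d2 q02 F2 X w Z"
  shows "fst (snd X) = run d1 (fst (snd Z)) (bar ia w)
    \<and> fst (snd (snd X)) = run d2 (fst (snd (snd Z))) (bar ia w)"
  using assms by induction (auto simp: arc_def bar_def run_def)

lemma arc_deterministic:
  assumes "arc ia \<kappa> d1 q01 F1 d2 q02 F2 X a (P, q1, q2, l)"
    and "arc ia \<kappa> d1 q01 F1 d2 q02 F2 X a (P', q1, q2, l')"
  shows "P = P' \<and> l = l'"
  using assms unfolding arc_def by auto

lemma path_midpoint_unique:
  assumes "path ia \<kappa> d1 q01 F1 d2 q02 F2 A u B" "path ia \<kappa> d1 q01 F1 d2 q02 F2 B v A'"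
    and "path ia \<kappa> d1 q01 F1 d2 q02 F2 A u B'" "path ia \<kappa> d1 q01 F1 d2 q02 F2 B' v A'"
  shows "B = B'"
  using assms
proof (induction u arbitrary: A)
  case Nil
  then show ?case by (simp add: path_Nil_iff)
next
  case (Cons a u)
  obtain P q1 q2 l where
    arc1: "arc ia \<kappa> d1 q01 F1 d2 q02 F2 A a (P, q1, q2, l)" and
    path1: "path ia \<kappa> d1 q01 F1 d2 q02 F2 (P, q1, q2, l) u B"
    using Cons.prems(1) by (metis path_Cons_iff prod_cases4)
  obtain P' q1' q2' l' where
    arc2: "arc ia \<kappa> d1 q01 F1 d2 q02 F2 A a (P', q1', q2', l')" and
    path2: "path ia \<kappa> d1 q01 F1 d2 q02 F2 (P', q1', q2', l') u B'"
    using Cons.prems(3) by (metis path_Cons_iff prod_cases4)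
  have "q1 = q1' \<and> q2 = q2'"
    using path_bridge_components_run[OF path_append[OF path1 Cons.prems(2)]]
      path_bridge_components_run[OF path_append[OF path2 Cons.prems(4)]]
    by simp
  with arc1 arc2 have "(P, q1, q2, l) = (P', q1', q2', l')"
    using arc_deterministic by (metis (no_types))
  with path1 path2 Cons.prems(2,4) show ?case
    by (metis Cons.IH)
qed

theorem lemma2:
  fixes ia :: "'a::finite \<Rightarrow> 'a" and \<kappa> :: nat
    and d1 :: "'q::finite \<Rightarrow> 'a \<Rightarrow> 'q" and q01 :: 'q and F1 :: "'q set"
    and d2 :: "'r::finite \<Rightarrow> 'a \<Rightarrow> 'r" and q02 :: 'r and F2 :: "'r set"
    and A A' B B' :: "('q, 'r) nstate" and u v :: "'a list"
  assumes "involution ia" and "0 < \<kappa>"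
    and "path ia \<kappa> d1 q01 F1 d2 q02 F2 A u B"
    and "path ia \<kappa> d1 q01 F1 d2 q02 F2 B v A'"
    and "path ia \<kappa> d1 q01 F1 d2 q02 F2 A u B'"
    and "path ia \<kappa> d1 q01 F1 d2 q02 F2 B' v A'"
  shows "B = B'"
  using path_midpoint_unique assms(3-6) .

end
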